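(* Let $\mathcal K$ be any simplicial complex on $[m]$ and $\mathbf k$ a commutative ring. In the homology algebra $H(\Omega_*\mathbf k\langle\mathcal K\rangle)$ of the dg-algebra below, the classes $u_i=[\chi_{e_i}]$ and $w_I=[\psi_I]$ (for $I\in\mathrm{MF}(\mathcal K)$) satisfy: (1) $u_i^2=0$ for all $i$, and $[u_i,u_j]=0$ for all $\{i,j\}\in\mathcal K$; (2) $[u_i,w_I]=0$ if $i\in I\in\mathrm{MF}(\mathcal K)$; (3) $\sum_{i\in L,\ L\setminus\{i\}\notin\mathcal K}[u_i,w_{L\setminus\{i\}}]=0$ for every $L\in\mathrm{AMF}(\mathcal K)$.
   Context: $\Omega_*\mathbf k\langle\mathcal K\rangle$ is the dg-algebra $T(\chi_\alpha:\alpha\in\mathbb Z_{\ge0}^m\setminus\{0\},\ \operatorname{supp}\alpha\in\mathcal K)$ (free graded associative algebra), $\deg\chi_\alpha=2|\alpha|-1$ where $|\alpha|=\sum\alpha_i$ and $\operatorname{supp}\alpha=\{i:\alpha_i\ne0\}$, with differential $d(\chi_\alpha)=\sum_{\alpha=\beta+\gamma,\ \beta,\gamma\ne0}\chi_\beta\chi_\gamma$ extended as a derivation with Koszul signs. For $A\subseteq[m]$ write $\chi_A=\chi_{\sum_{i\in A}e_i}$, and for $I$ with all proper subsets in $\mathcal K$ set $\psi_I=\sum_{I=A\sqcup B,\ A,B\ne\varnothing}\chi_A\chi_B$ (a cycle). (This homology algebra is isomorphic to $H_*(\Omega DJ_{\mathcal K};\mathbf k)\cong\operatorname{Ext}_{\mathbf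 k[\mathcal K]}(\mathbf k,\mathbf k)$.) $[x,y]=xy-(-1)^{|x||y|}yx$. $\mathrm{MF}(\mathcal K)$: subsets $I\notin\mathcal K$ with all proper subsets in $\mathcal K$. $\mathrm{AMF}(\mathcal K)$: subsets $L$ with all subsets of size $\le|L|-2$ in $\mathcal K$ but not all subsets of size $|L|-1$ in $\mathcal K$ (i.e. $\partial^2\Delta_L\subseteq\mathcal K_L\subsetneq\partial\Delta_L$). *)

theory Defs
  imports Main
begin

text \<open>Vertices are natural numbers in [m] = {1..m}.  A multi-index alpha in Z_{>=0}^m is a
  function nat => nat (its support lies in [m] whenever supp alpha is a face of K).
  Elements of the free graded algebra T(chi_alpha) over the commutative ring 'k are
  finitely supported functions from words (lists of multi-indices) to 'k.\<close>

type_synonym mindex = "nat \<Rightarrow> nat"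
type_synonym word = "mindex list"
type_synonym 'k tens = "word \<Rightarrow> 'k"

definition simplicial_complex :: "nat \<Rightarrow> nat set set \<Rightarrow> bool" where
  "simplicial_complex m K \<longleftrightarrow> {} \<in> K \<and> (\<forall>\<sigma>\<in>K. \<sigma> \<subseteq> {1..m}) \<and> (\<forall>\<sigma>\<in>K. \<forall>\<tau>. \<tau> \<subseteq> \<sigma> \<longrightarrow> \<tau> \<in> K)"

definition msupp :: "mindex \<Rightarrow> nat set" where
  "msupp \<alpha> = {i. \<alpha> i \<noteq> 0}"

definition valid_gen :: "nat set set \<Rightarrow> mindex \<Rightarrow> bool" where
  "valid_gen K \<alpha> \<longleftrightarrow> \<alpha> \<noteq> (\<lambda>_. 0) \<and> msupp \<alpha> \<in> K"

definition mdeg :: "mindex \<Rightarrow> nat" where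
  "mdeg \<alpha> = 2 * (\<Sum>i\<in>msupp \<alpha>. \<alpha> i) - 1"

text \<open>The underlying module of Omega_* k<K>: finitely supported combinations of words in valid generators.\<close>
definition alg :: "nat set set \<Rightarrow> ('k::comm_ring_1) tens set" where
  "alg K = {x. finite {w. x w \<noteq> 0} \<and> (\<forall>w. x w \<noteq> 0 \<longrightarrow> (\<forall>\<alpha>\<in>set w. valid_gen K \<alpha>))}"

definition tadd :: "('k::comm_ring_1) tens \<Rightarrow> 'k tens \<Rightarrow> 'k tens" where
  "tadd x y = (\<lambda>w. x w + y w)"

definition tsub :: "('k::comm_ring_1) tens \<Rightarrow> 'k tens \<Rightarrow> 'k tens" where
  "tsub x y = (\<lambda>w. x w - y w)"

definition tsmul :: "'k::comm_ring_1 \<Rightarrow> 'k tens \<Rightarrow> 'k tens" where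
  "tsmul c x = (\<lambda>w. c * x w)"

definition tzero :: "('k::comm_ring_1) tens" where
  "tzero = (\<lambda>w. 0)"

definition tsum :: "('a \<Rightarrow> ('k::comm_ring_1) tens) \<Rightarrow> 'a set \<Rightarrow> 'k tens" where
  "tsum f A = (\<lambda>w. \<Sum>a\<in>A. f a w)"

definition tmul :: "('k::comm_ring_1) tens \<Rightarrow> 'k tens \<Rightarrow> 'k tens" where
  "tmul x y = (\<lambda>w. \<Sum>j\<le>length w. x (take j w) * y (drop j w))"

definition mono :: "word \<Rightarrow> ('k::comm_ring_1) tens" where
  "mono u = (\<lambda>w. if w = u then 1 else 0)"

definition chi :: "mindex \<Rightarrow> ('k::comm_ring_1) tens" where
  "chi \<alpha> = mono [\<alpha>]"

definition dgen :: "mindex \<Rightarrow> ('k::comm_ring_1) tens" where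
  "dgen \<alpha> = tsum (\<lambda>\<beta>. tmul (chi \<beta>) (chi (\<lambda>i. \<alpha> i - \<beta> i)))
      {\<beta>. (\<forall>i. \<beta> i \<le> \<alpha> i) \<and> \<beta> \<noteq> (\<lambda>_. 0) \<and> \<beta> \<noteq> \<alpha>}"

text \<open>Differential of a word g_0 ... g_{n-1}, extended as a derivation with Koszul signs:
  the sign in front of the j-th term is (-1)^(deg g_0 + ... + deg g_{j-1}).\<close>
definition dword :: "word \<Rightarrow> ('k::comm_ring_1) tens" where
  "dword w = tsum (\<lambda>j. tsmul ((-1) ^ (\<Sum>k<j. mdeg (w ! k)))
       (tmul (tmul (mono (take j w)) (dgen (w ! j))) (mono (drop (Suc j) w)))) {..<length w}"

definition dd :: "('k::comm_ring_1) tens \<Rightarrow> 'k tens" where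
  "dd x = tsum (\<lambda>w. tsmul (x w) (dword w)) {w. x w \<noteq> 0}"

text \<open>A cycle represents zero in homology iff it is a boundary of an element of the dg-algebra.\<close>
definition is_boundary :: "nat set set \<Rightarrow> ('k::comm_ring_1) tens \<Rightarrow> bool" where
  "is_boundary K x \<longleftrightarrow> (\<exists>y\<in>alg K. dd y = x)"

text \<open>Graded commutator of homogeneous elements x (degree p) and y (degree q).\<close>
definition gcomm :: "('k::comm_ring_1) tens \<Rightarrow> nat \<Rightarrow> 'k tens \<Rightarrow> nat \<Rightarrow> 'k tens" where
  "gcomm x p y q = tsub (tmul x y) (tsmul ((-1) ^ (p * q)) (tmul y x))"

definition indic :: "nat set \<Rightarrow> mindex" where
  "indic A = (\<lambda>i. if i \<in> A then 1 else 0)"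

definition chiS :: "nat set \<Rightarrow> ('k::comm_ring_1) tens" where
  "chiS A = chi (indic A)"

definition psi :: "nat set \<Rightarrow> ('k::comm_ring_1) tens" where
  "psi I = tsum (\<lambda>A. tmul (chiS A) (chiS (I - A))) {A. A \<subseteq> I \<and> A \<noteq> {} \<and> A \<noteq> I}"

definition MF :: "nat \<Rightarrow> nat set set \<Rightarrow> nat set set" where
  "MF m K = {I. I \<subseteq> {1..m} \<and> I \<notin> K \<and> (\<forall>J. J \<subset> I \<longrightarrow> J \<in> K)}"

definition AMF :: "nat \<Rightarrow> nat set set \<Rightarrow> nat set set" where
  "AMF m K = {L. L \<subseteq> {1..m} \<and> (\<forall>J. J \<subseteq> L \<and> int (card J) \<le> int (card L) - 2 \<longrightarrow> J \<in> K)
               \<and> \<not> (\<forall>J. J \<subseteq> L \<and> int (card J) = int (card L) - 1 \<longrightarrow> J \<in> K)}"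

end

theory Submission
  imports Defs "HOL-Library.FuncSet" "HOL-Library.Function_Algebras"
begin

text \<open>Each class is shown to be the boundary of an explicit element. For (1) and (2) these are
  \<open>\<chi>\<^bsub>2e\<^sub>i\<^esub>\<close>, \<open>2\<chi>\<^bsub>2e\<^sub>i\<^esub>\<close> and \<open>\<chi>\<^bsub>e\<^sub>i+e\<^sub>j\<^esub>\<close>.
  For (3) and (4) write \<open>d \<chi>\<^sub>\<gamma> = \<Sum> \<chi>\<^sub>\<beta> \<chi>\<^sub>\<beta>'\<close> over the splittings
  \<open>\<gamma> = \<beta> + \<beta>'\<close> into nonzero parts. Since \<open>d\<^sup>2 \<chi>\<^sub>\<gamma> = 0\<close>, the differential of the partial
  sum over the splittings outside a set \<open>E\<close> is minus the differential of the omitted terms,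
  \<open>\<Sum>\<^bsub>E\<^esub> (\<chi>\<^sub>\<beta> d\<chi>\<^sub>\<beta>' - d\<chi>\<^sub>\<beta> \<chi>\<^sub>\<beta>')\<close>. For \<open>I \<in> MF\<close> take
  \<open>\<gamma> = e\<^sub>I + e\<^sub>i\<close> and \<open>E = {(e\<^sub>I, e\<^sub>i), (e\<^sub>i, e\<^sub>I)}\<close>; for \<open>L \<in> AMF\<close> take \<open>\<gamma> = e\<^sub>L\<close>
  and for \<open>E\<close> the splittings with a non-face part, which are exactly \<open>(e\<^bsub>L-i\<^esub>, e\<^sub>i)\<close> and
  \<open>(e\<^sub>i, e\<^bsub>L-i\<^esub>)\<close> with \<open>L - i \<notin> K\<close>. The remaining splittings involve only faces, so the
  partial sum lies in the dg-algebra, while \<open>d\<chi>\<^bsub>e\<^sub>i\<^esub> = 0\<close> and \<open>d\<chi>\<^bsub>e\<^sub>A\<^esub> = \<psi>\<^sub>A\<close> turn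
  the omitted terms into the required commutators.\<close>

section \<open>Tensor algebra\<close>

lemma tmul_mono: "tmul (mono u) (mono v) = (mono (u @ v) :: 'k::comm_ring_1 tens)"
proof
  fix w
  have "tmul (mono u) (mono v) w = (\<Sum>j\<le>length w. if j = length u then (of_bool (w = u @ v) :: 'k) else 0)"
    unfolding tmul_def mono_def
  proof (rule sum.cong)
    fix j assume "j \<in> {..length w}"
    then have "take j w = u \<and> drop j w = v \<longleftrightarrow> j = length u \<and> w = u @ v"
      by (metis append_eq_conv_conj append_take_drop_id atMost_iff length_take min.absorb2)
    then show "(if take j w = u then 1 else 0) * (if drop j w = v then 1 else 0)
        = (if j = length u then (of_bool (w = u @ v) :: 'k) else 0)"
      by auto
  qed simp
  also have "\<dots> = mono (u @ v) w"
    by (simp add: mono_def)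
  finally show "tmul (mono u) (mono v) w = (mono (u @ v) w :: 'k)" .
qed

lemma tmul_Nil_left: "tmul (mono []) x = x"
proof
  fix w
  have "tmul (mono []) x w = (\<Sum>j\<le>length w. if j = 0 then x w else 0)"
    unfolding tmul_def mono_def by (rule sum.cong) auto
  then show "tmul (mono []) x w = x w"
    by simp
qed

lemma tmul_Nil_right: "tmul x (mono []) = x"
proof
  fix w
  have "tmul x (mono []) w = (\<Sum>j\<le>length w. if j = length w then x w else 0)"
    unfolding tmul_def mono_def by (rule sum.cong) auto
  then show "tmul x (mono []) w = x w"
    by simp
qed

lemma tmul_tsum_left: "tmul (tsum f A) x = tsum (\<lambda>a. tmul (f a) x) A"
  by (simp add: tmul_def tsum_def sum_distrib_right fun_eq_iff sum.swap[of _ A])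

lemma tmul_tsum_right: "tmul x (tsum f A) = tsum (\<lambda>a. tmul x (f a)) A"
  by (simp add: tmul_def tsum_def sum_distrib_left fun_eq_iff sum.swap[of _ A])

lemma tmul_tzero_left [simp]: "tmul tzero x = tzero"
  by (simp add: tmul_def tzero_def)

lemma tmul_tzero_right [simp]: "tmul x tzero = tzero"
  by (simp add: tmul_def tzero_def)

lemma tsum_singleton [simp]: "tsum f {a} = f a"
  by (simp add: tsum_def)

lemma tsum_image: "inj_on h A \<Longrightarrow> tsum f (h ` A) = tsum (\<lambda>a. f (h a)) A"
  by (simp add: tsum_def sum.reindex)

lemma tsum_tsum_Sigma:
  assumes "finite A" "\<And>a. a \<in> A \<Longrightarrow> finite (B a)"
  shows "tsum (\<lambda>a. tsum (g a) (B a)) A = tsum (\<lambda>p. g (fst p) (snd p)) (Sigma A B)"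
  using assms by (simp add: tsum_def sum.Sigma split_def)

lemma tsum_Un_vanishing:
  assumes "finite A" "finite B" "\<And>a. a \<in> A \<Longrightarrow> f a = tzero"
  shows "tsum f (A \<union> B) = tsum f B"
  unfolding tsum_def
  by (rule ext, rule sum.mono_neutral_right) (use assms in \<open>auto simp: tzero_def\<close>)

lemma tsum_mono_eq_0: "w \<notin> f ` A \<Longrightarrow> tsum (\<lambda>a. mono (f a)) A w = 0"
  by (auto simp: tsum_def mono_def intro!: sum.neutral)

lemma gcomm_1_even_deg: "gcomm x 1 y (2 * n - 2) = tsub (tmul x y) (tmul y x)"
proof -
  have "even (2 * n - 2)"
    by simp
  then show ?thesis
    by (simp add: gcomm_def tsmul_def)
qed

section \<open>Multi-indices and their splittings\<close>

lemma msupp_add [simp]: "msupp (\<alpha> + \<beta>) = msupp \<alpha> \<union> msupp \<beta>"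
  by (auto simp: msupp_def)

lemma msupp_indic [simp]: "msupp (indic A) = A"
  by (auto simp: msupp_def indic_def)

lemma msupp_eq_empty_iff [simp]: "msupp \<alpha> = {} \<longleftrightarrow> \<alpha> = 0"
  by (auto simp: msupp_def fun_eq_iff)

lemma msupp_mono: "\<beta> \<le> \<gamma> \<Longrightarrow> msupp \<beta> \<subseteq> msupp \<gamma>"
  unfolding msupp_def using le_funD[of \<beta> \<gamma>] by (auto intro: less_le_trans)

lemma finite_mindex_le:
  assumes "finite (msupp \<gamma>)"
  shows "finite {\<beta>::mindex. \<beta> \<le> \<gamma>}"
proof -
  let ?r = "\<lambda>\<beta>. restrict \<beta> (msupp \<gamma>)"
  have "inj_on ?r {\<beta>. \<beta> \<le> \<gamma>}"
  proof (rule inj_onI)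
    fix \<beta> \<beta>' assume "\<beta> \<in> {\<beta>. \<beta> \<le> \<gamma>}" "\<beta>' \<in> {\<beta>. \<beta> \<le> \<gamma>}" and eq: "?r \<beta> = ?r \<beta>'"
    have "\<beta> i = \<beta>' i" for i
    proof (cases "\<gamma> i = 0")
      case True
      then show ?thesis using \<open>\<beta> \<in> _\<close> \<open>\<beta>' \<in> _\<close> by (auto dest!: le_funD[of _ _ i])
    next
      case False
      then show ?thesis using fun_cong[OF eq, of i] by (simp add: msupp_def)
    qed
    then show "\<beta> = \<beta>'" ..
  qed
  moreover have "?r ` {\<beta>. \<beta> \<le> \<gamma>} \<subseteq> PiE (msupp \<gamma>) (\<lambda>i. {..\<gamma> i})"
    by (auto simp: le_fun_def)
  then have "finite (?r ` {\<beta>. \<beta> \<le> \<gamma>})"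
    by (rule finite_subset) (simp add: assms finite_PiE)
  ultimately show ?thesis
    using finite_imageD by blast
qed

lemma indic_eq_0_iff [simp]: "indic A = 0 \<longleftrightarrow> A = {}"
  by (auto simp: indic_def fun_eq_iff)

lemma indic_inject [simp]: "indic A = indic B \<longleftrightarrow> A = B"
  by (metis msupp_indic)

lemma indic_add: "A \<inter> B = {} \<Longrightarrow> indic A + indic B = indic (A \<union> B)"
  by (auto simp: indic_def fun_eq_iff)

lemma valid_gen_iff: "valid_gen K \<alpha> \<longleftrightarrow> \<alpha> \<noteq> 0 \<and> msupp \<alpha> \<in> K"
  by (simp add: valid_gen_def zero_fun_def)

definition splits :: "mindex \<Rightarrow> (mindex \<times> mindex) set" where
  "splits \<gamma> = {p. fst p \<noteq> 0 \<and> snd p \<noteq> 0 \<and> fst p + snd p = \<gamma>}"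

lemma splits_le: "p \<in> splits \<gamma> \<Longrightarrow> fst p \<le> \<gamma> \<and> snd p \<le> \<gamma>"
  by (auto simp: splits_def le_fun_def)

lemma splits_swap: "p \<in> splits \<gamma> \<Longrightarrow> (snd p, fst p) \<in> splits \<gamma>"
  by (simp add: splits_def add.commute)

lemma finite_splits: "finite (msupp \<gamma>) \<Longrightarrow> finite (splits \<gamma>)"
proof (rule finite_subset)
  show "splits \<gamma> \<subseteq> {\<beta>. \<beta> \<le> \<gamma>} \<times> {\<beta>. \<beta> \<le> \<gamma>}"
    by (auto simp: splits_def le_fun_def)
qed (simp add: finite_mindex_le)

lemma finite_msupp_splits:
  "finite (msupp \<gamma>) \<Longrightarrow> p \<in> splits \<gamma> \<Longrightarrow> finite (msupp (fst p)) \<and> finite (msupp (snd p))"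
  using splits_le msupp_mono finite_subset by metis

definition quad :: "(mindex \<times> mindex) set \<Rightarrow> 'k::comm_ring_1 tens" where
  "quad P = tsum (\<lambda>p. tmul (chi (fst p)) (chi (snd p))) P"

lemma quad_eq_tsum_mono: "quad P = tsum (\<lambda>p. mono [fst p, snd p]) P"
  by (simp add: quad_def chi_def tmul_mono)

lemma tmul_quad_chi: "tmul (quad P) (chi c) = tsum (\<lambda>p. mono [fst p, snd p, c]) P"
  by (simp add: quad_eq_tsum_mono tmul_tsum_left chi_def tmul_mono)

lemma tmul_chi_quad: "tmul (chi a) (quad P) = tsum (\<lambda>p. mono [a, fst p, snd p]) P"
  by (simp add: quad_eq_tsum_mono tmul_tsum_right chi_def tmul_mono)

lemma dgen_eq_quad: "dgen \<gamma> = quad (splits \<gamma>)"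
proof -
  have "dgen \<gamma> = tsum (\<lambda>\<beta>. tmul (chi \<beta>) (chi (\<gamma> - \<beta>))) {\<beta>. \<beta> \<le> \<gamma> \<and> \<beta> \<noteq> 0 \<and> \<beta> \<noteq> \<gamma>}"
    by (simp add: dgen_def le_fun_def fun_diff_def zero_fun_def)
  also have "\<dots> = quad (splits \<gamma>)"
    unfolding quad_def tsum_def
  proof (intro ext sum.reindex_bij_witness[of _ "\<lambda>p. fst p" "\<lambda>\<beta>. (\<beta>, \<gamma> - \<beta>)"])
    fix p assume "p \<in> splits \<gamma>"
    then obtain \<beta> \<beta>' where "p = (\<beta>, \<beta>')" "\<gamma> = \<beta> + \<beta>'" "\<beta> \<noteq> 0" "\<beta>' \<noteq> 0"
      by (cases p) (auto simp: splits_def)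
    then show "(fst p, \<gamma> - fst p) = p" "fst p \<in> {\<beta>. \<beta> \<le> \<gamma> \<and> \<beta> \<noteq> 0 \<and> \<beta> \<noteq> \<gamma>}"
      by (auto simp: splits_def fun_eq_iff le_fun_def)
  next
    fix \<beta> assume "\<beta> \<in> {\<beta>. \<beta> \<le> \<gamma> \<and> \<beta> \<noteq> 0 \<and> \<beta> \<noteq> \<gamma>}"
    then have "\<beta> + (\<gamma> - \<beta>) = \<gamma>" "\<gamma> - \<beta> \<noteq> 0" "\<beta> \<noteq> 0"
      by (auto simp: fun_eq_iff le_fun_def) (metis antisym)
    then show "(\<beta>, \<gamma> - \<beta>) \<in> splits \<gamma>"
      by (simp add: splits_def)
  qed simp_all
  finally show ?thesis .
qed

lemma splits_indic:
  "splits (indic I) = (\<lambda>A. (indic A, indic (I - A))) ` {A. A \<subseteq> I \<and> A \<noteq> {} \<and> A \<noteq> I}"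
proof (intro set_eqI iffI)
  fix p assume "p \<in> splits (indic I)"
  then obtain \<beta> \<beta>' where p: "p = (\<beta>, \<beta>')" "\<beta> \<noteq> 0" "\<beta>' \<noteq> 0" and sum: "\<beta> + \<beta>' = indic I"
    by (cases p) (auto simp: splits_def)
  define A where "A = msupp \<beta>"
  have coord: "\<beta> i + \<beta>' i = (if i \<in> I then 1 else 0)" for i
    using fun_cong[OF sum, of i] by (simp add: indic_def)
  have "\<beta> i = indic A i \<and> \<beta>' i = indic (I - A) i" for i
    using coord[of i] by (cases "i \<in> I") (auto simp: A_def msupp_def indic_def)
  then have "\<beta> = indic A" "\<beta>' = indic (I - A)"
    by (simp_all add: fun_eq_iff)
  moreover have "A \<subseteq> I"
    using coord by (auto simp: A_def msupp_def) (metis add_is_0 neq0_conv)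
  ultimately show "p \<in> (\<lambda>A. (indic A, indic (I - A))) ` {A. A \<subseteq> I \<and> A \<noteq> {} \<and> A \<noteq> I}"
    using p by auto
next
  fix p assume "p \<in> (\<lambda>A. (indic A, indic (I - A))) ` {A. A \<subseteq> I \<and> A \<noteq> {} \<and> A \<noteq> I}"
  then obtain A where "p = (indic A, indic (I - A))" "A \<subseteq> I" "A \<noteq> {}" "A \<noteq> I"
    by blast
  then show "p \<in> splits (indic I)"
    by (auto simp: splits_def indic_add Un_absorb1)
qed

lemma psi_eq_dgen: "psi I = dgen (indic I)"
proof -
  have "inj_on (\<lambda>A. (indic A, indic (I - A))) {A. A \<subseteq> I \<and> A \<noteq> {} \<and> A \<noteq> I}"
    by (rule inj_onI) simp
  then show ?thesis
    by (simp add: psi_def dgen_eq_quad splits_indic quad_def chiS_def sum.reindex tsum_def)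
qed

lemma dgen_indic_singleton: "dgen (indic {i}) = tzero"
proof -
  have "{A. A \<subseteq> {i} \<and> A \<noteq> {} \<and> A \<noteq> {i}} = {}"
    by auto
  then show ?thesis
    by (simp only: dgen_eq_quad splits_indic quad_def tsum_def tzero_def image_empty sum.empty)
qed

lemma splits_indic_pair:
  assumes "i \<noteq> j"
  shows "splits (indic {i, j}) = {(indic {i}, indic {j}), (indic {j}, indic {i})}"
proof -
  have "{A. A \<subseteq> {i, j} \<and> A \<noteq> {} \<and> A \<noteq> {i, j}} = {{i}, {j}}"
    using assms by auto
  moreover have "{i, j} - {i} = {j}" "{i, j} - {j} = {i}"
    using assms by auto
  ultimately show ?thesis
    by (simp add: splits_indic)
qed

lemma splits_full_support:
  assumes "i \<in> I" "p \<in> splits (indic I + indic {i})" "msupp (fst p) = I"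
  shows "p = (indic I, indic {i})"
proof -
  obtain \<beta> \<beta>' where p: "p = (\<beta>, \<beta>')" "\<beta>' \<noteq> 0" and sum: "\<beta> + \<beta>' = indic I + indic {i}"
    using assms(2) by (cases p) (auto simp: splits_def)
  have coord: "\<beta> j + \<beta>' j = of_bool (j \<in> I) + of_bool (j = i)" for j
    using fun_cong[OF sum, of j] by (simp add: indic_def)
  have pos: "\<beta> j \<noteq> 0 \<longleftrightarrow> j \<in> I" for j
    using assms(3) p(1) by (auto simp: msupp_def)
  have out: "\<beta>' j = 0" if "j \<noteq> i" for j
    using coord[of j] pos[of j] that by (cases "j \<in> I") simp_all
  obtain k where "\<beta>' k \<noteq> 0"
    using p(2) by (auto simp: fun_eq_iff)
  with out have "\<beta>' i \<noteq> 0"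
    by (cases "k = i") auto
  then have "\<beta>' i = 1"
    using coord[of i] pos[of i] assms(1) by simp
  with out have "\<beta>' = indic {i}"
    by (auto simp: indic_def fun_eq_iff)
  with sum have "\<beta> = indic I"
    by simp
  with p(1) \<open>\<beta>' = indic {i}\<close> show ?thesis
    by simp
qed

lemma splits_double: "splits (indic {i} + indic {i}) = {(indic {i}, indic {i})}"
proof (intro set_eqI iffI)
  fix p assume p: "p \<in> splits (indic {i} + indic {i})"
  have "msupp (fst p) \<subseteq> msupp (indic {i} + indic {i})"
    using splits_le[OF p] by (intro msupp_mono) simp
  moreover have "fst p \<noteq> 0"
    using p by (simp add: splits_def)
  ultimately have "msupp (fst p) = {i}"
    by (simp add: subset_singleton_iff)
  with p show "p \<in> {(indic {i}, indic {i})}"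
    using splits_full_support[of i "{i}" p] by simp
qed (simp add: splits_def)

section \<open>The differential of quadratic elements\<close>

lemma dd_eq_tsum:
  assumes "finite W" "{w. x w \<noteq> 0} \<subseteq> W"
  shows "dd x = tsum (\<lambda>w. tsmul (x w) (dword w)) W"
  unfolding dd_def tsum_def tsmul_def
  by (rule ext, rule sum.mono_neutral_left[OF assms]) auto

lemma dd_tsum_mono:
  assumes "finite A" "inj_on f A"
  shows "dd (tsum (\<lambda>a. mono (f a)) A) = (tsum (\<lambda>a. dword (f a)) A :: 'k::comm_ring_1 tens)"
proof -
  define x :: "'k tens" where "x = tsum (\<lambda>a. mono (f a)) A"
  have coeff: "x (f b) = 1" if "b \<in> A" for b
  proof -
    have "x (f b) = (\<Sum>a\<in>A. if a = b then 1 else 0)"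
      unfolding x_def tsum_def mono_def using assms(2) that
      by (intro sum.cong) (auto dest: inj_onD)
    then show ?thesis
      using assms(1) that by simp
  qed
  have "x w = 0" if "w \<notin> f ` A" for w
    unfolding x_def using that by (rule tsum_mono_eq_0)
  then have "dd x = tsum (\<lambda>w. tsmul (x w) (dword w)) (f ` A)"
    using assms(1) by (intro dd_eq_tsum) auto
  also have "\<dots> = tsum (\<lambda>a. tsmul (x (f a)) (dword (f a))) A"
    using assms(2) by (simp add: tsum_def sum.reindex)
  also have "\<dots> = tsum (\<lambda>a. dword (f a)) A"
    unfolding tsum_def tsmul_def by (intro ext sum.cong) (simp_all add: coeff)
  finally show ?thesis
    unfolding x_def .
qed

lemma dword_singleton: "dword [\<gamma>] = dgen \<gamma>"
  by (simp add: dword_def tsum_def tsmul_def tmul_Nil_left tmul_Nil_right)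

lemma dd_smul_chi: "dd (tsmul c (chi \<gamma>)) = tsmul c (dgen \<gamma>)"
proof -
  have "dd (tsmul c (chi \<gamma>)) = tsum (\<lambda>w. tsmul (tsmul c (chi \<gamma>) w) (dword w)) {[\<gamma>]}"
    by (rule dd_eq_tsum) (auto simp: tsmul_def chi_def mono_def)
  then show ?thesis
    by (simp add: tsum_def tsmul_def chi_def mono_def dword_singleton)
qed

lemma odd_mdeg:
  assumes "\<beta> \<noteq> 0" "finite (msupp \<beta>)"
  shows "odd (mdeg \<beta>)"
proof -
  obtain i where "\<beta> i \<noteq> 0"
    using assms(1) by (auto simp: fun_eq_iff)
  then have "\<beta> i \<le> (\<Sum>j\<in>msupp \<beta>. \<beta> j)" "0 < \<beta> i"
    using assms(2) by (auto simp: msupp_def intro: member_le_sum)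
  then have "0 < (\<Sum>j\<in>msupp \<beta>. \<beta> j)"
    by linarith
  moreover have "odd (2 * s - 1)" if "0 < s" for s :: nat
    using that by presburger
  ultimately show ?thesis
    unfolding mdeg_def by blast
qed

text \<open>The differential of \<open>\<chi>\<^sub>\<beta> \<chi>\<^sub>\<beta>'\<close>; the sign is that of the odd generator \<open>\<chi>\<^sub>\<beta>\<close>.\<close>

definition dpair :: "mindex \<times> mindex \<Rightarrow> 'k::comm_ring_1 tens" where
  "dpair p = tsub (tmul (dgen (fst p)) (chi (snd p))) (tmul (chi (fst p)) (dgen (snd p)))"

lemma dword_pair:
  assumes "\<beta> \<noteq> 0" "finite (msupp \<beta>)"
  shows "dword [\<beta>, \<beta>'] = dpair (\<beta>, \<beta>')"
proof -
  have "{..<length [\<beta>, \<beta>']} = {0, 1}"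
    by auto
  then show ?thesis
    using odd_mdeg[OF assms]
    by (simp add: dword_def dpair_def tsum_def tsmul_def tsub_def chi_def tmul_Nil_left tmul_Nil_right)
qed

lemma dd_quad:
  assumes "finite P" "\<And>p. p \<in> P \<Longrightarrow> fst p \<noteq> 0 \<and> finite (msupp (fst p))"
  shows "dd (quad P) = tsum dpair P"
proof -
  have "inj_on (\<lambda>p. [fst p, snd p]) P"
    by (rule inj_onI) (simp add: prod_eq_iff)
  then have "dd (quad P) = tsum (\<lambda>p. dword [fst p, snd p]) P"
    unfolding quad_eq_tsum_mono by (rule dd_tsum_mono[OF assms(1)])
  also have "\<dots> = tsum dpair P"
    unfolding tsum_def using assms(2) by (simp add: dword_pair)
  finally show ?thesis .
qed

definition splits3 :: "mindex \<Rightarrow> (mindex \<times> mindex \<times> mindex) set" where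
  "splits3 \<gamma> = {t. fst t \<noteq> 0 \<and> fst (snd t) \<noteq> 0 \<and> snd (snd t) \<noteq> 0 \<and> fst t + fst (snd t) + snd (snd t) = \<gamma>}"

lemma tsum_dgen_chi_splits:
  assumes "finite (msupp \<gamma>)"
  shows "tsum (\<lambda>p. tmul (dgen (fst p)) (chi (snd p))) (splits \<gamma>)
    = tsum (\<lambda>t. mono [fst t, fst (snd t), snd (snd t)]) (splits3 \<gamma>)"
proof -
  have "tsum (\<lambda>p. tmul (dgen (fst p)) (chi (snd p))) (splits \<gamma>)
      = tsum (\<lambda>p. tsum (\<lambda>q. mono [fst q, snd q, snd p]) (splits (fst p))) (splits \<gamma>)"
    by (simp add: dgen_eq_quad tmul_quad_chi)
  also have "\<dots> = tsum (\<lambda>pq. mono [fst (snd pq), snd (snd pq), snd (fst pq)]) (Sigma (splits \<gamma>) (\<lambda>p. splits (fst p)))"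
    using assms by (intro tsum_tsum_Sigma finite_splits) (auto dest: finite_msupp_splits)
  also have "\<dots> = tsum (\<lambda>t. mono [fst t, fst (snd t), snd (snd t)]) (splits3 \<gamma>)"
    unfolding tsum_def
    by (intro ext sum.reindex_bij_witness[of _ "\<lambda>t. ((fst t + fst (snd t), snd (snd t)), (fst t, fst (snd t)))"
          "\<lambda>pq. (fst (snd pq), snd (snd pq), snd (fst pq))"])
      (simp_all add: splits_def splits3_def split_paired_all)
  finally show ?thesis .
qed

lemma tsum_chi_dgen_splits:
  assumes "finite (msupp \<gamma>)"
  shows "tsum (\<lambda>p. tmul (chi (fst p)) (dgen (snd p))) (splits \<gamma>)
    = tsum (\<lambda>t. mono [fst t, fst (snd t), snd (snd t)]) (splits3 \<gamma>)"
proof -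
  have "tsum (\<lambda>p. tmul (chi (fst p)) (dgen (snd p))) (splits \<gamma>)
      = tsum (\<lambda>p. tsum (\<lambda>q. mono [fst p, fst q, snd q]) (splits (snd p))) (splits \<gamma>)"
    by (simp add: dgen_eq_quad tmul_chi_quad)
  also have "\<dots> = tsum (\<lambda>pq. mono [fst (fst pq), fst (snd pq), snd (snd pq)]) (Sigma (splits \<gamma>) (\<lambda>p. splits (snd p)))"
    using assms by (intro tsum_tsum_Sigma finite_splits) (auto dest: finite_msupp_splits)
  also have "\<dots> = tsum (\<lambda>t. mono [fst t, fst (snd t), snd (snd t)]) (splits3 \<gamma>)"
    unfolding tsum_def
    by (intro ext sum.reindex_bij_witness[of _ "\<lambda>t. ((fst t, fst (snd t) + snd (snd t)), (fst (snd t), snd (snd t)))"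
          "\<lambda>pq. (fst (fst pq), fst (snd pq), snd (snd pq))"])
      (simp_all add: splits_def splits3_def split_paired_all add.assoc)
  finally show ?thesis .
qed

text \<open>This is \<open>d (d \<chi>\<^sub>\<gamma>) = 0\<close>: both halves of the Leibniz expansion enumerate the words
  \<open>\<chi>\<^sub>a \<chi>\<^sub>b \<chi>\<^sub>c\<close> with \<open>a + b + c = \<gamma>\<close>.\<close>

lemma tsum_dpair_splits:
  assumes "finite (msupp \<gamma>)"
  shows "tsum dpair (splits \<gamma>) = tzero"
proof -
  have "tsum dpair (splits \<gamma>) = tsub (tsum (\<lambda>p. tmul (dgen (fst p)) (chi (snd p))) (splits \<gamma>))
      (tsum (\<lambda>p. tmul (chi (fst p)) (dgen (snd p))) (splits \<gamma>))"
    by (simp add: dpair_def tsum_def tsub_def sum_subtractf)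
  then show ?thesis
    by (simp add: tsum_dgen_chi_splits[OF assms] tsum_chi_dgen_splits[OF assms] tsub_def tzero_def)
qed

lemma dd_quad_splits_diff:
  assumes "finite (msupp \<gamma>)" "E \<subseteq> splits \<gamma>"
  shows "dd (quad (splits \<gamma> - E))
    = tsub (tsum (\<lambda>p. tmul (chi (fst p)) (dgen (snd p))) E) (tsum (\<lambda>p. tmul (dgen (fst p)) (chi (snd p))) E)"
proof -
  have fin: "finite (splits \<gamma>)" "finite E"
    using assms finite_splits finite_subset by blast+
  have "dd (quad (splits \<gamma> - E)) = tsum dpair (splits \<gamma> - E)"
    using fin assms by (intro dd_quad) (auto simp: splits_def dest: finite_msupp_splits)
  also have "\<dots> = tsub (tsum dpair (splits \<gamma>)) (tsum dpair E)"
    using fin assms(2) by (simp add: tsum_def tsub_def sum_diff fun_eq_iff)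
  also have "\<dots> = tsub tzero (tsum dpair E)"
    by (simp only: tsum_dpair_splits[OF assms(1)])
  finally show ?thesis
    by (simp add: dpair_def tsum_def tsub_def tzero_def sum_subtractf fun_eq_iff)
qed

definition singleton_splits :: "(nat \<Rightarrow> nat set) \<Rightarrow> nat set \<Rightarrow> (mindex \<times> mindex) set" where
  "singleton_splits A T =
    (\<lambda>i. (indic (A i), indic {i})) ` T \<union> (\<lambda>i. (indic {i}, indic (A i))) ` T"

lemma dd_quad_splits_diff_singleton_splits:
  assumes "finite (msupp \<gamma>)" "finite T" "singleton_splits A T \<subseteq> splits \<gamma>"
  shows "dd (quad (splits \<gamma> - singleton_splits A T))
    = tsum (\<lambda>i. gcomm (chiS {i}) 1 (psi (A i)) (2 * card (A i) - 2)) T"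
proof -
  define E1 where "E1 = (\<lambda>i. (indic (A i), indic {i})) ` T"
  define E2 where "E2 = (\<lambda>i. (indic {i}, indic (A i))) ` T"
  have fin: "finite E1" "finite E2"
    using assms(2) by (simp_all add: E1_def E2_def)
  have inj: "inj_on (\<lambda>i. (indic (A i), indic {i})) T" "inj_on (\<lambda>i. (indic {i}, indic (A i))) T"
    by (auto intro: inj_onI)
  have "tsum (\<lambda>p. tmul (chi (fst p)) (dgen (snd p))) (E1 \<union> E2) = tsum (\<lambda>p. tmul (chi (fst p)) (dgen (snd p))) E2"
    using fin by (intro tsum_Un_vanishing) (auto simp: E1_def dgen_indic_singleton)
  also have "\<dots> = tsum (\<lambda>i. tmul (chiS {i}) (psi (A i))) T"
    by (simp add: E2_def tsum_image[OF inj(2)] chiS_def psi_eq_dgen)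
  finally have left: "tsum (\<lambda>p. tmul (chi (fst p)) (dgen (snd p))) (singleton_splits A T)
      = tsum (\<lambda>i. tmul (chiS {i}) (psi (A i))) T"
    by (simp add: singleton_splits_def E1_def E2_def)
  have "tsum (\<lambda>p. tmul (dgen (fst p)) (chi (snd p))) (E2 \<union> E1) = tsum (\<lambda>p. tmul (dgen (fst p)) (chi (snd p))) E1"
    using fin by (intro tsum_Un_vanishing) (auto simp: E2_def dgen_indic_singleton)
  also have "\<dots> = tsum (\<lambda>i. tmul (psi (A i)) (chiS {i})) T"
    by (simp add: E1_def tsum_image[OF inj(1)] chiS_def psi_eq_dgen)
  finally have right: "tsum (\<lambda>p. tmul (dgen (fst p)) (chi (snd p))) (singleton_splits A T)
      = tsum (\<lambda>i. tmul (psi (A i)) (chiS {i})) T"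
    by (simp add: singleton_splits_def E1_def E2_def Un_commute)
  show ?thesis
    unfolding dd_quad_splits_diff[OF assms(1,3)] left right gcomm_1_even_deg
    by (simp add: tsum_def tsub_def sum_subtractf)
qed

section \<open>Boundaries\<close>

lemma in_algI:
  assumes "finite W" "{w. x w \<noteq> 0} \<subseteq> W" "\<And>w \<alpha>. w \<in> W \<Longrightarrow> \<alpha> \<in> set w \<Longrightarrow> valid_gen K \<alpha>"
  shows "x \<in> alg K"
  using assms unfolding alg_def by (auto intro: finite_subset)

lemma smul_chi_in_alg: "valid_gen K \<gamma> \<Longrightarrow> tsmul c (chi \<gamma>) \<in> alg K"
  by (rule in_algI[of "{[\<gamma>]}"]) (auto simp: tsmul_def chi_def mono_def)

lemma quad_in_alg:
  assumes "finite P" "\<And>p. p \<in> P \<Longrightarrow> valid_gen K (fst p) \<and> valid_gen K (snd p)"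
  shows "quad P \<in> alg K"
proof (rule in_algI[of "(\<lambda>p. [fst p, snd p]) ` P"])
  show "{w. quad P w \<noteq> 0} \<subseteq> (\<lambda>p. [fst p, snd p]) ` P"
    unfolding quad_eq_tsum_mono using tsum_mono_eq_0 by blast
qed (use assms in auto)

lemma is_boundaryI: "dd y = x \<Longrightarrow> y \<in> alg K \<Longrightarrow> is_boundary K x"
  unfolding is_boundary_def by blast

lemma is_boundary_smul_dgen: "valid_gen K \<gamma> \<Longrightarrow> is_boundary K (tsmul c (dgen \<gamma>))"
  by (rule is_boundaryI[OF dd_smul_chi smul_chi_in_alg])

lemma boundary_chi_square:
  assumes "{i} \<in> K"
  shows "is_boundary K (tmul (chiS {i}) (chiS {i}) :: 'k::comm_ring_1 tens)"
proof -
  have "tmul (chiS {i}) (chiS {i}) = tsmul (1 :: 'k) (dgen (indic {i} + indic {i}))"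
    by (simp add: dgen_eq_quad splits_double quad_def tsum_def tsmul_def chiS_def)
  then show ?thesis
    using assms by (simp add: is_boundary_smul_dgen valid_gen_iff)
qed

lemma boundary_commutator_chi_chi:
  assumes "{i, j} \<in> K"
  shows "is_boundary K (gcomm (chiS {i} :: 'k::comm_ring_1 tens) 1 (chiS {j}) 1)"
proof (cases "i = j")
  case True
  have "gcomm (chiS {i}) 1 (chiS {j}) 1 = tsmul (2 :: 'k) (dgen (indic {i} + indic {i}))"
    using True by (simp add: gcomm_def dgen_eq_quad splits_double quad_def tsum_def tsmul_def tsub_def chiS_def fun_eq_iff)
  then show ?thesis
    using assms True by (simp add: is_boundary_smul_dgen valid_gen_iff)
next
  case False
  have "(indic {i}, indic {j}) \<noteq> (indic {j}, indic {i})"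
    using False by simp
  then have "gcomm (chiS {i}) 1 (chiS {j}) 1 = tsmul (1 :: 'k) (dgen (indic {i, j}))"
    using False by (simp add: gcomm_def dgen_eq_quad splits_indic_pair quad_def tsum_def tsmul_def tsub_def chiS_def)
  then show ?thesis
    using assms by (simp add: is_boundary_smul_dgen valid_gen_iff)
qed

lemma valid_gen_splits_MF:
  assumes "I \<in> MF m K" "i \<in> I" "p \<in> splits (indic I + indic {i}) - singleton_splits (\<lambda>_. I) {i}"
  shows "valid_gen K (fst p) \<and> valid_gen K (snd p)"
proof -
  have supp: "msupp (indic I + indic {i}) = I"
    using assms(2) by auto
  have proper: "msupp (fst q) \<subset> I" if "q \<in> splits (indic I + indic {i}) - singleton_splits (\<lambda>_. I) {i}" for q
  proof
    show "msupp (fst q) \<subseteq> I"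
      using that splits_le msupp_mono supp by blast
    show "msupp (fst q) \<noteq> I"
      using that splits_full_support[OF assms(2), of q] by (auto simp: singleton_splits_def)
  qed
  have "(snd p, fst p) \<in> splits (indic I + indic {i}) - singleton_splits (\<lambda>_. I) {i}"
    using assms(3) splits_swap[of p] by (cases p) (auto simp: singleton_splits_def)
  then have "msupp (fst p) \<subset> I" "msupp (snd p) \<subset> I"
    using proper[OF assms(3)] proper[of "(snd p, fst p)"] by simp_all
  then have "msupp (fst p) \<in> K" "msupp (snd p) \<in> K"
    using assms(1) by (simp_all add: MF_def)
  then show ?thesis
    using assms(3) by (simp add: valid_gen_iff splits_def)
qed

lemma boundary_commutator_chi_psi:
  assumes "I \<in> MF m K" "i \<in> I"
  shows "is_boundary K (gcomm (chiS {i} :: 'k::comm_ring_1 tens) 1 (psi I) (2 * card I - 2))"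
proof (rule is_boundaryI)
  let ?P = "splits (indic I + indic {i}) - singleton_splits (\<lambda>_. I) {i}"
  have "finite I"
    using assms(1) by (auto simp: MF_def intro: finite_subset)
  moreover have "singleton_splits (\<lambda>_. I) {i} \<subseteq> splits (indic I + indic {i})"
    using assms(2) by (auto simp: singleton_splits_def splits_def add.commute)
  ultimately show "dd (quad ?P) = gcomm (chiS {i} :: 'k tens) 1 (psi I) (2 * card I - 2)"
    using dd_quad_splits_diff_singleton_splits[of "indic I + indic {i}" "{i}" "\<lambda>_. I"] by simp
  show "quad ?P \<in> alg K"
    using \<open>finite I\<close> valid_gen_splits_MF[OF assms] by (intro quad_in_alg) (simp_all add: finite_splits)
qed

lemma AMF_non_faces:
  assumes "L \<in> AMF m K" "{} \<in> K"
  shows "{A. A \<subseteq> L \<and> A \<noteq> {} \<and> A \<noteq> L \<and> A \<notin> K} = (\<lambda>i. L - {i}) ` {i \<in> L. L - {i} \<notin> K}"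
proof (intro set_eqI iffI)
  fix A assume A: "A \<in> {A. A \<subseteq> L \<and> A \<noteq> {} \<and> A \<noteq> L \<and> A \<notin> K}"
  have "finite L"
    using assms(1) by (auto simp: AMF_def intro: finite_subset)
  have "\<not> card A + 2 \<le> card L"
    using A assms(1) by (auto simp: AMF_def)
  moreover have "card A < card L"
    using A \<open>finite L\<close> by (auto intro: psubset_card_mono)
  ultimately have "card (L - A) = 1"
    using A \<open>finite L\<close> by (auto simp: card_Diff_subset finite_subset)
  then obtain i where i: "L - A = {i}"
    by (auto simp: card_Suc_eq)
  then have "A = L - {i}" "i \<in> L"
    using A by auto
  then show "A \<in> (\<lambda>i. L - {i}) ` {i \<in> L. L - {i} \<notin> K}"
    using A by auto
next
  fix A assume "A \<in> (\<lambda>i. L - {i}) ` {i \<in> L. L - {i} \<notin> K}"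
  then show "A \<in> {A. A \<subseteq> L \<and> A \<noteq> {} \<and> A \<noteq> L \<and> A \<notin> K}"
    using assms(2) by auto
qed

lemma AMF_splits_non_faces:
  assumes "L \<in> AMF m K" "{} \<in> K"
  shows "{p \<in> splits (indic L). msupp (fst p) \<notin> K \<or> msupp (snd p) \<notin> K}
    = singleton_splits (\<lambda>i. L - {i}) {i \<in> L. L - {i} \<notin> K}"
    (is "?E = singleton_splits _ ?T")
proof -
  let ?S = "{A. A \<subseteq> L \<and> A \<noteq> {} \<and> A \<noteq> L}"
  have non_face: "A \<in> ?S \<and> A \<notin> K \<longleftrightarrow> A \<in> (\<lambda>i. L - {i}) ` ?T" for A
    using AMF_non_faces[OF assms(1,2)] by blast
  have "?E = (\<lambda>A. (indic A, indic (L - A))) ` {A \<in> ?S. A \<notin> K \<or> L - A \<notin> K}"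
    by (auto simp: splits_indic)
  also have "{A \<in> ?S. A \<notin> K \<or> L - A \<notin> K} = (\<lambda>i. L - {i}) ` ?T \<union> (\<lambda>i. {i}) ` ?T"
  proof (intro set_eqI iffI)
    fix A assume A: "A \<in> {A \<in> ?S. A \<notin> K \<or> L - A \<notin> K}"
    then have "A \<in> (\<lambda>i. L - {i}) ` ?T \<or> L - A \<in> (\<lambda>i. L - {i}) ` ?T"
      using non_face[of A] non_face[of "L - A"] by auto
    moreover have "A = {i}" if "L - A = L - {i}" "i \<in> L" for i
      using that A by blast
    ultimately show "A \<in> (\<lambda>i. L - {i}) ` ?T \<union> (\<lambda>i. {i}) ` ?T"
      by blast
  next
    fix A assume "A \<in> (\<lambda>i. L - {i}) ` ?T \<union> (\<lambda>i. {i}) ` ?T"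
    moreover have "L - (L - {i}) = {i}" if "i \<in> L" for i
      using that by blast
    ultimately show "A \<in> {A \<in> ?S. A \<notin> K \<or> L - A \<notin> K}"
      using non_face assms(2) by auto
  qed
  also have "(\<lambda>A. (indic A, indic (L - A))) ` ((\<lambda>i. L - {i}) ` ?T \<union> (\<lambda>i. {i}) ` ?T)
      = singleton_splits (\<lambda>i. L - {i}) ?T"
    by (auto simp: singleton_splits_def image_image double_diff intro!: image_cong)
  finally show ?thesis .
qed

lemma boundary_sum_commutators_chi_psi:
  assumes "L \<in> AMF m K" "{} \<in> K"
  shows "is_boundary K (tsum (\<lambda>i. gcomm (chiS {i} :: 'k::comm_ring_1 tens) 1 (psi (L - {i})) (2 * card (L - {i}) - 2))
    {i \<in> L. L - {i} \<notin> K})"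
proof (rule is_boundaryI)
  let ?T = "{i \<in> L. L - {i} \<notin> K}"
  let ?E = "{p \<in> splits (indic L). msupp (fst p) \<notin> K \<or> msupp (snd p) \<notin> K}"
  have "finite L"
    using assms(1) by (auto simp: AMF_def intro: finite_subset)
  then show "dd (quad (splits (indic L) - ?E))
      = tsum (\<lambda>i. gcomm (chiS {i} :: 'k tens) 1 (psi (L - {i})) (2 * card (L - {i}) - 2)) ?T"
    unfolding AMF_splits_non_faces[OF assms]
    by (intro dd_quad_splits_diff_singleton_splits) (auto simp flip: AMF_splits_non_faces[OF assms])
  show "quad (splits (indic L) - ?E) \<in> alg K"
  proof (rule quad_in_alg)
    show "finite (splits (indic L) - ?E)"
      using \<open>finite L\<close> by (simp add: finite_splits)
  qed (auto simp: splits_def valid_gen_iff)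
qed

theorem mainTheorem13:
  fixes K :: "nat set set" and m :: nat
  assumes "simplicial_complex m K"
  shows "(\<forall>i. {i} \<in> K \<longrightarrow> is_boundary K (tmul (chiS {i}) (chiS {i}) :: ('k::comm_ring_1) tens))
       \<and> (\<forall>i j. {i, j} \<in> K \<longrightarrow>
            is_boundary K (gcomm (chiS {i} :: 'k tens) 1 (chiS {j}) 1))
       \<and> (\<forall>I i. I \<in> MF m K \<and> i \<in> I \<longrightarrow>
            is_boundary K (gcomm (chiS {i} :: 'k tens) 1 (psi I) (2 * card I - 2)))
       \<and> (\<forall>L \<in> AMF m K.
            is_boundary K (tsum (\<lambda>i. gcomm (chiS {i} :: 'k tens) 1 (psi (L - {i})) (2 * card (L - {i}) - 2))
                              {i \<in> L. L - {i} \<notin> K}))"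
proof -
  have "{} \<in> K"
    using assms by (simp add: simplicial_complex_def)
  then show ?thesis
    by (intro conjI allI impI ballI)
      (blast intro: boundary_chi_square boundary_commutator_chi_chi boundary_commutator_chi_psi
        boundary_sum_commutators_chi_psi)+
qed

end
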